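(* Let $q,K,L,T$ be positive integers and let $\boldsymbol{\alpha}^{(p)}\in\mathbb{Z}_q^K$, $\boldsymbol{\beta}^{(p)}\in\mathbb{Z}_q^L$ be arbitrary. Suppose $\boldsymbol{\alpha}^{(s)}=(b_\alpha+jx_\alpha)_{j=0}^{T-1}\bmod q$ and $\boldsymbol{\beta}^{(s)}=(b_\beta+jx_\beta)_{j=0}^{T-1}\bmod q$ are arithmetic progressions in $\mathbb{Z}_q$ whose common differences $x_\alpha,x_\beta$ are coprime to $q$. Let $N=|\mathcal{TL}\cup\mathcal{TR}\cup\mathcal{BL}\cup\mathcal{BR}|$. Then for every prime $p$ with $q\mid p-1$ there exist $N$ $q$-th roots of unity $\boldsymbol\rho=(\rho_1,\dots,\rho_N)$ in $\mathbb{F}_p$ such that (a) $\mathbf V(\boldsymbol\rho,\boldsymbol\gamma)$ is invertible and (b) all $T\times T$ submatrices of $\mathbf V(\boldsymbol\rho,\boldsymbol{\alpha}^{(s)})$ and of $\mathbf V(\boldsymbol\rho,\boldsymbol{\beta}^{(s)})$ are invertible.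
   Context: $\mathbb{Z}_q$ denotes the integers mod $q$. For a vector $\mathbf v$, $\{\mathbf v\}$ is the set of its entries; sumsets are $\mathcal A+\mathcal B=\{a+b:a\in\mathcal A,b\in\mathcal B\}$ with addition in $\mathbb{Z}_q$. $\mathcal{TL}=\{\boldsymbol{\alpha}^{(p)}\}+\{\boldsymbol{\beta}^{(p)}\}$, $\mathcal{TR}=\{\boldsymbol{\alpha}^{(p)}\}+\{\boldsymbol{\beta}^{(s)}\}$, $\mathcal{BL}=\{\boldsymbol{\alpha}^{(s)}\}+\{\boldsymbol{\beta}^{(p)}\}$, $\mathcal{BR}=\{\boldsymbol{\alpha}^{(s)}\}+\{\boldsymbol{\beta}^{(s)}\}$, and $\boldsymbol\gamma$ lists the elements of $\mathcal{TL}\cup\mathcal{TR}\cup\mathcal{BL}\cup\mathcal{BR}$ in ascending order (identifying $\mathbb{Z}_q$ with $\{0,\dots,q-1\}$). For a vector $\boldsymbol\rho$ of length $n$ of $q$-th roots of unity and $\boldsymbol\delta\in\mathbb{Z}_q^m$, $\mathbf V(\boldsymbol\rho,\boldsymbol\delta)$ is the $n\times m$ matrix with $(i,j)$ entry $\rho_i^{\delta_j}$ (well defined since $\rho_i^q=1$). *)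

theory Defs
  imports "Berlekamp_Zassenhaus.Finite_Field" "Jordan_Normal_Form.Matrix" "Jordan_Normal_Form.DL_Submatrix"
begin

(* Elements of Z_q are represented by naturals in {0..<q}. *)

definition sumset_mod :: "nat \<Rightarrow> nat list \<Rightarrow> nat list \<Rightarrow> nat set" where
  "sumset_mod q as bs = {(a + b) mod q | a b. a \<in> set as \<and> b \<in> set bs}"

definition arith_prog :: "nat \<Rightarrow> nat \<Rightarrow> nat \<Rightarrow> nat \<Rightarrow> nat list" where
  "arith_prog q b x T = map (\<lambda>j. (b + j * x) mod q) [0..<T]"

definition vandermonde_like :: "'a::semiring_1 list \<Rightarrow> nat list \<Rightarrow> 'a mat" where
  "vandermonde_like \<rho> \<delta> = mat (length \<rho>) (length \<delta>) (\<lambda>(i, j). (\<rho> ! i) ^ (\<delta> ! j))"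

definition gamma_vec :: "nat \<Rightarrow> nat list \<Rightarrow> nat list \<Rightarrow> nat list \<Rightarrow> nat list \<Rightarrow> nat list" where
  "gamma_vec q ap bp as bs = sorted_list_of_set
     (sumset_mod q ap bp \<union> sumset_mod q ap bs \<union> sumset_mod q as bp \<union> sumset_mod q as bs)"

end

theory Submission
  imports Defs "HOL-Computational_Algebra.Polynomial" "HOL-Number_Theory.Cong"
    "Jordan_Normal_Form.Determinant"
begin

(*
  If q divides the order p - 1 of the multiplicative group of a finite field, the field has at
  least q q-th roots of unity: every non-zero a is sent to one by a |-> a^m with m = (p - 1)/q,
  and the fibres of this map have at most m elements.

  The nodes rho_1, rho_2, ... are chosen greedily among these roots. Expanding det V(rho, gamma)
  along the newly added row gives a sum of monomials in the new node with distinct exponents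
  below q, whose coefficient for the newest exponent is the previous non-zero minor; it has
  fewer than q roots, so some q-th root of unity avoids them.

  Part (b) only needs the nodes to be distinct: reducing exponents mod q, a T x T submatrix of
  V(rho, alpha^(s)) has entries rho_i^b (rho_i^x)^j, a row-scaled Vandermonde matrix in the
  nodes rho_i^x, which are distinct since r |-> r^x permutes the q-th roots of unity when x is
  coprime to q.
*)

lemma card_roots_power_sum_less:
  fixes c :: "'b \<Rightarrow> 'a::idom" and e :: "'b \<Rightarrow> nat"
  assumes J: "finite J" and inj: "inj_on e J" and lt: "\<forall>j\<in>J. e j < d"
    and k: "k \<in> J" and c0: "c k \<noteq> 0"
  shows "finite {x. (\<Sum>j\<in>J. c j * x ^ e j) = 0}"
    and "card {x. (\<Sum>j\<in>J. c j * x ^ e j) = 0} < d"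
proof -
  define P where "P = (\<Sum>j\<in>J. monom (c j) (e j))"
  have poly_P: "poly P x = (\<Sum>j\<in>J. c j * x ^ e j)" for x
    unfolding P_def poly_sum by (simp add: poly_monom)
  have "coeff P (e k) = (\<Sum>j\<in>J. if e j = e k then c j else 0)"
    unfolding P_def coeff_sum by simp
  also have "\<dots> = (\<Sum>j\<in>J. if j = k then c j else 0)"
    by (rule sum.cong) (use inj k in \<open>auto dest: inj_onD\<close>)
  also have "\<dots> = c k" using J k by simp
  finally have "P \<noteq> 0" using c0 by auto
  then show "finite {x. (\<Sum>j\<in>J. c j * x ^ e j) = 0}"
    using poly_roots_finite[of P] unfolding poly_P by blast
  have "d \<ge> 1" using lt k by fastforce
  have "degree P \<le> d - 1"
  proof (rule degree_le, intro allI impI)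
    fix i assume "d - 1 < i"
    then show "coeff P i = 0" unfolding P_def coeff_sum using lt \<open>d \<ge> 1\<close>
      by (intro sum.neutral) fastforce
  qed
  with card_poly_roots_bound[OF \<open>P \<noteq> 0\<close>] \<open>d \<ge> 1\<close>
  show "card {x. (\<Sum>j\<in>J. c j * x ^ e j) = 0} < d" unfolding poly_P by linarith
qed

lemma card_power_eq_le:
  fixes c :: "'a::idom"
  assumes "m > 0"
  shows "card {x. x ^ m = c} \<le> m"
proof -
  let ?c = "\<lambda>j. if j = m then 1 else - c"
  have "{x. (\<Sum>j\<in>{0, m}. ?c j * x ^ id j) = 0} = {x. x ^ m = c}"
    using assms by (auto simp: algebra_simps)
  moreover have "card {x. (\<Sum>j\<in>{0, m}. ?c j * x ^ id j) = 0} < m + 1"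
    by (rule card_roots_power_sum_less(2)[where k = m]) auto
  ultimately show ?thesis by simp
qed

lemma card_roots_of_unity_ge:
  assumes "q dvd CARD('a::finite_field) - 1" "q > 0"
  shows "q \<le> card {r::'a. r ^ q = 1}"
proof -
  define R where "R = {r::'a. r ^ q = 1}"
  define m where "m = (CARD('a) - 1) div q"
  have card_units: "card (UNIV - {0::'a}) = q * m"
    using assms unfolding m_def by (simp add: card_Diff_subset)
  have "card {0, 1::'a} \<le> CARD('a)" by (rule card_mono) simp_all
  then have "m > 0" using card_units by (cases m) (auto simp: card_Diff_subset)
  have fermat: "a ^ (CARD('a) - 1) = 1" if "a \<noteq> 0" for a :: 'a
  proof -
    have "a * a ^ (CARD('a) - 1) = a ^ CARD('a)"
      by (simp flip: power_Suc)
    also have "\<dots> = a" by (rule finite_field_power_card_eq_same)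
    finally show ?thesis using that by simp
  qed
  have "UNIV - {0} \<subseteq> (\<Union>c\<in>R. {a::'a. a ^ m = c})"
  proof
    fix a :: 'a assume "a \<in> UNIV - {0}"
    then have "(a ^ m) ^ q = 1"
      using fermat[of a] card_units by (simp add: card_Diff_subset flip: power_mult mult.commute)
    then show "a \<in> (\<Union>c\<in>R. {a. a ^ m = c})" unfolding R_def by auto
  qed
  then have "q * m \<le> card (\<Union>c\<in>R. {a::'a. a ^ m = c})"
    unfolding card_units[symmetric] by (rule card_mono[rotated]) simp
  also have "\<dots> \<le> (\<Sum>c\<in>R. card {a::'a. a ^ m = c})" by (rule card_UN_le) simp
  also have "\<dots> \<le> (\<Sum>c\<in>R. m)" by (rule sum_mono) (rule card_power_eq_le[OF \<open>m > 0\<close>])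
  finally show ?thesis unfolding R_def using \<open>m > 0\<close> by simp
qed

lemma power_eq_power_if_cong:
  fixes r :: "'a::comm_monoid_mult"
  assumes "r ^ q = 1" "[m = n] (mod q)"
  shows "r ^ m = r ^ n"
proof -
  have power_mod: "r ^ k = r ^ (k mod q)" for k
  proof -
    have "r ^ k = (r ^ q) ^ (k div q) * r ^ (k mod q)"
      by (simp flip: power_mult power_add)
    then show ?thesis using assms(1) by simp
  qed
  have "m mod q = n mod q" using assms(2) unfolding cong_def .
  then show ?thesis by (subst (1 2) power_mod) simp
qed

lemma inj_on_power_roots_of_unity:
  assumes "coprime x q"
  shows "inj_on (\<lambda>r::'a::comm_monoid_mult. r ^ x) {r. r ^ q = 1}"
proof (rule inj_onI)
  obtain u where u: "[x * u = 1] (mod q)"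
    using cong_solve_coprime_nat[OF assms] by auto
  have inverse_power: "r = (r ^ x) ^ u" if "r ^ q = 1" for r :: 'a
    using power_eq_power_if_cong[OF that u] by (simp add: power_mult)
  fix r s :: 'a assume "r \<in> {r. r ^ q = 1}" "s \<in> {r. r ^ q = 1}" "r ^ x = s ^ x"
  then show "r = s" using inverse_power[of r] inverse_power[of s] by simp
qed

lemma det_non_zero_imp_invertible_mat:
  fixes A :: "'a::field mat"
  assumes A: "A \<in> carrier_mat n n" and "det A \<noteq> 0"
  shows "invertible_mat A"
proof -
  obtain B where "B \<in> carrier_mat n n" "B * A = 1\<^sub>m n" "A * B = 1\<^sub>m n"
    using det_non_zero_imp_unit[OF assms] unfolding Units_def ring_mat_simps by auto
  then show ?thesis using A unfolding invertible_mat_def inverts_mat_def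
    by (metis carrier_matD square_mat.simps)
qed

lemma det_row_scaled_vandermonde_non_zero:
  fixes M :: "'a::field mat"
  assumes M: "M \<in> carrier_mat n n"
    and M_index: "\<And>i j. i < n \<Longrightarrow> j < n \<Longrightarrow> M $$ (i, j) = w i * y i ^ j"
    and w: "\<And>i. i < n \<Longrightarrow> w i \<noteq> 0" and y: "inj_on y {..<n}"
  shows "det M \<noteq> 0"
proof
  assume "det M = 0"
  then obtain v where v: "v \<in> carrier_vec n" "v \<noteq> 0\<^sub>v n" "M *\<^sub>v v = 0\<^sub>v n"
    using det_0_iff_vec_prod_zero_field[OF M] by auto
  obtain k where k: "k < n" "v $ k \<noteq> 0" using v(1,2) by (auto simp: vec_eq_iff)
  define Z where "Z = {z. (\<Sum>j<n. v $ j * z ^ id j) = 0}"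
  have "finite Z" "card Z < n"
    unfolding Z_def using k by (intro card_roots_power_sum_less[where k = k and d = n]; simp)+
  have "y ` {..<n} \<subseteq> Z"
  proof safe
    fix i assume i: "i < n"
    have "0 = (M *\<^sub>v v) $ i" using v(3) i by simp
    also have "\<dots> = (\<Sum>j<n. M $$ (i, j) * v $ j)"
      using M v(1) i by (simp add: scalar_prod_def atLeast0LessThan)
    also have "\<dots> = w i * (\<Sum>j<n. v $ j * y i ^ j)"
      by (simp add: M_index i sum_distrib_left mult_ac)
    finally show "y i \<in> Z" unfolding Z_def using w[OF i] by simp
  qed
  then have "card (y ` {..<n}) \<le> card Z" by (rule card_mono[OF \<open>finite Z\<close>])
  then show False using \<open>card Z < n\<close> card_image[OF y] by simp
qed

lemma vandermonde_like_carrier: "vandermonde_like \<rho> \<delta> \<in> carrier_mat (length \<rho>) (length \<delta>)"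
  unfolding vandermonde_like_def by simp

lemma vandermonde_like_index [simp]:
  "i < length \<rho> \<Longrightarrow> j < length \<delta> \<Longrightarrow> vandermonde_like \<rho> \<delta> $$ (i, j) = (\<rho> ! i) ^ (\<delta> ! j)"
  unfolding vandermonde_like_def by simp

lemma distinct_if_det_vandermonde_like_non_zero:
  fixes \<rho> :: "'a::comm_ring_1 list"
  assumes "det (vandermonde_like \<rho> \<delta>) \<noteq> 0" "length \<delta> = length \<rho>"
  shows "distinct \<rho>"
proof (rule ccontr)
  assume "\<not> distinct \<rho>"
  then obtain i j where ij: "i \<noteq> j" "i < length \<rho>" "j < length \<rho>" "\<rho> ! i = \<rho> ! j"
    by (auto simp: distinct_conv_nth)
  have "det (vandermonde_like \<rho> \<delta>) = 0"
    by (rule det_identical_rows[OF _ ij(1-3)])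
      (use vandermonde_like_carrier[of \<rho> \<delta>] assms(2) ij in \<open>auto intro!: eq_vecI\<close>)
  with assms(1) show False by simp
qed

lemma det_vandermonde_like_snoc:
  fixes \<rho> :: "'a::comm_ring_1 list"
  assumes "length \<delta> = length \<rho>"
  obtains c where
    "\<And>r. det (vandermonde_like (\<rho> @ [r]) (\<delta> @ [e])) = (\<Sum>j\<le>length \<rho>. c j * r ^ ((\<delta> @ [e]) ! j))"
    and "c (length \<rho>) = det (vandermonde_like \<rho> \<delta>)"
proof
  let ?k = "length \<rho>"
  let ?V = "\<lambda>r. vandermonde_like (\<rho> @ [r]) (\<delta> @ [e])"
  have V: "?V r \<in> carrier_mat (Suc ?k) (Suc ?k)" for r
    using vandermonde_like_carrier[of "\<rho> @ [r]" "\<delta> @ [e]"] assms by simp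
  have minor: "mat_delete (?V r) ?k j = mat_delete (?V 0) ?k j" for r j
    by (rule eq_matI) (use assms in \<open>auto simp: mat_delete_def vandermonde_like_def nth_append\<close>)
  have cofactor: "cofactor (?V r) ?k j = cofactor (?V 0) ?k j" for r j
    unfolding cofactor_def by (subst minor) (rule refl)
  fix r
  have "det (?V r) = (\<Sum>j<Suc ?k. ?V r $$ (?k, j) * cofactor (?V r) ?k j)"
    by (rule laplace_expansion_row[OF V]) simp
  also have "\<dots> = (\<Sum>j\<le>?k. cofactor (?V 0) ?k j * r ^ ((\<delta> @ [e]) ! j))"
    unfolding lessThan_Suc_atMost cofactor[of r]
    by (intro sum.cong) (use assms in \<open>auto simp: nth_append\<close>)
  finally show "det (?V r) = (\<Sum>j\<le>?k. cofactor (?V 0) ?k j * r ^ ((\<delta> @ [e]) ! j))" .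
  have "mat_delete (?V 0) ?k ?k = vandermonde_like \<rho> \<delta>"
    by (rule eq_matI) (use assms in \<open>auto simp: mat_delete_def vandermonde_like_def nth_append\<close>)
  then show "cofactor (?V 0) ?k ?k = det (vandermonde_like \<rho> \<delta>)"
    unfolding cofactor_def by simp
qed

lemma exists_roots_of_unity_det_vandermonde_like_non_zero:
  fixes \<gamma> :: "nat list"
  assumes "distinct \<gamma>" "\<forall>e\<in>set \<gamma>. e < q" and roots: "q \<le> card {r::'a::idom. r ^ q = 1}"
  shows "\<exists>\<rho> :: 'a list. length \<rho> = length \<gamma> \<and> (\<forall>r\<in>set \<rho>. r ^ q = 1) \<and>
           det (vandermonde_like \<rho> \<gamma>) \<noteq> 0"
  using assms(1,2)
proof (induction \<gamma> rule: rev_induct)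
  case Nil
  have "det (vandermonde_like ([] :: 'a list) []) = 1"
    by (rule det_dim_zero) (use vandermonde_like_carrier[of "[] :: 'a list" "[]"] in simp)
  then show ?case by auto
next
  case (snoc e \<delta>)
  then obtain \<rho> :: "'a list" where \<rho>: "length \<rho> = length \<delta>" "\<forall>r\<in>set \<rho>. r ^ q = 1"
    "det (vandermonde_like \<rho> \<delta>) \<noteq> 0" by auto
  obtain c where det_snoc:
    "\<And>r. det (vandermonde_like (\<rho> @ [r]) (\<delta> @ [e])) = (\<Sum>j\<le>length \<rho>. c j * r ^ ((\<delta> @ [e]) ! j))"
    and "c (length \<rho>) = det (vandermonde_like \<rho> \<delta>)"
    using det_vandermonde_like_snoc \<rho>(1) by metis
  define Z where "Z = {r::'a. (\<Sum>j\<le>length \<rho>. c j * r ^ ((\<delta> @ [e]) ! j)) = 0}"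
  have "inj_on ((!) (\<delta> @ [e])) {..length \<rho>}"
    using snoc.prems(1) \<rho>(1) by (intro inj_on_nth) auto
  moreover have "\<forall>j\<in>{..length \<rho>}. (\<delta> @ [e]) ! j < q"
    using snoc.prems(2) \<rho>(1) by (auto simp: nth_append)
  ultimately have "finite Z" "card Z < q"
    unfolding Z_def using \<rho>(3) \<open>c (length \<rho>) = _\<close>
    by (intro card_roots_power_sum_less[where k = "length \<rho>"]; simp)+
  with roots have "\<not> {r::'a. r ^ q = 1} \<subseteq> Z"
    using card_mono[of Z "{r::'a. r ^ q = 1}"] by linarith
  then obtain r where "r ^ q = 1" "det (vandermonde_like (\<rho> @ [r]) (\<delta> @ [e])) \<noteq> 0"
    unfolding Z_def det_snoc by auto
  with \<rho> show ?case by (intro exI[of _ "\<rho> @ [r]"]) auto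
qed

lemma pick_atLeastLessThan: "j < n \<Longrightarrow> pick {0..<n} j = j"
proof (induction j)
  case 0
  then show ?case by (auto intro: Least_equality)
next
  case (Suc j)
  then show ?case by (auto intro!: Least_equality)
qed

lemma
  assumes A: "A \<in> carrier_mat m n" and I: "I \<subseteq> {0..<m}"
  shows submatrix_rows_carrier: "submatrix A I {0..<n} \<in> carrier_mat (card I) n"
    and submatrix_rows_index:
      "\<And>i j. i < card I \<Longrightarrow> j < n \<Longrightarrow> submatrix A I {0..<n} $$ (i, j) = A $$ (pick I i, j)"
proof -
  have rows: "{i. i < dim_row A \<and> i \<in> I} = I"
    using A I by auto
  have cols: "{j. j < dim_col A \<and> j \<in> {0..<n}} = {0..<n}"
    using A by auto
  show "submatrix A I {0..<n} \<in> carrier_mat (card I) n"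
    by (rule carrier_matI) (simp_all only: dim_submatrix rows cols card_atLeastLessThan diff_zero)
  show "submatrix A I {0..<n} $$ (i, j) = A $$ (pick I i, j)" if "i < card I" "j < n" for i j
    using submatrix_index[of i A I j "{0..<n}"] that
    unfolding rows cols by (simp add: pick_atLeastLessThan)
qed

lemma length_arith_prog [simp]: "length (arith_prog q b x T) = T"
  unfolding arith_prog_def by simp

lemma nth_arith_prog [simp]: "j < T \<Longrightarrow> arith_prog q b x T ! j = (b + j * x) mod q"
  unfolding arith_prog_def by simp

lemma invertible_submatrix_vandermonde_like_arith_prog:
  fixes \<rho> :: "'a::field list"
  assumes "distinct \<rho>" and roots: "\<forall>r\<in>set \<rho>. r ^ q = 1" and "q > 0" and "coprime x q"
    and I: "I \<subseteq> {0..<length \<rho>}" "card I = T"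
  shows "invertible_mat (submatrix (vandermonde_like \<rho> (arith_prog q b x T)) I {0..<T})"
proof -
  let ?V = "vandermonde_like \<rho> (arith_prog q b x T)"
  let ?M = "submatrix ?V I {0..<T}"
  have V: "?V \<in> carrier_mat (length \<rho>) T"
    using vandermonde_like_carrier[of \<rho> "arith_prog q b x T"] by simp
  have M: "?M \<in> carrier_mat T T"
    using submatrix_rows_carrier[OF V I(1)] I(2) by simp
  have pick_less: "pick I i < length \<rho>" if "i < T" for i
    using pick_in_set[of i I] that I by auto
  define node where "node i = \<rho> ! pick I i" for i
  have node_root: "node i ^ q = 1" if "i < T" for i
    using roots pick_less[OF that] unfolding node_def by auto
  have "?M $$ (i, j) = node i ^ b * (node i ^ x) ^ j" if "i < T" "j < T" for i j
  proof -
    have "?M $$ (i, j) = node i ^ ((b + j * x) mod q)"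
      using that pick_less[OF that(1)] I(2) unfolding node_def
      by (subst submatrix_rows_index[OF V I(1)]) auto
    also have "\<dots> = node i ^ (b + j * x)"
      by (rule power_eq_power_if_cong[OF node_root[OF that(1)]]) (simp add: cong_def)
    also have "\<dots> = node i ^ b * (node i ^ x) ^ j"
      by (simp only: power_add power_mult mult.commute[of j x])
    finally show ?thesis .
  qed
  moreover have "node i ^ b \<noteq> 0" if "i < T" for i
    using node_root[OF that] \<open>q > 0\<close> by (auto simp: power_0_left)
  moreover have "inj_on (\<lambda>i. node i ^ x) {..<T}"
  proof -
    have "strict_mono_on {..<T} (pick I)"
      using I(2) by (auto intro!: strict_mono_onI pick_mono)
    then have "inj_on (pick I) {..<T}" by (rule strict_mono_on_imp_inj_on)
    moreover have "inj_on ((!) \<rho>) (pick I ` {..<T})"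
      using \<open>distinct \<rho>\<close> pick_less by (intro inj_on_nth) auto
    moreover have "inj_on (\<lambda>r. r ^ x) ((!) \<rho> ` pick I ` {..<T})"
      using node_root unfolding node_def
      by (intro inj_on_subset[OF inj_on_power_roots_of_unity[OF \<open>coprime x q\<close>]]) auto
    ultimately have "inj_on ((\<lambda>r. r ^ x) \<circ> (!) \<rho> \<circ> pick I) {..<T}"
      by (intro comp_inj_on)
    then show ?thesis unfolding node_def comp_def .
  qed
  ultimately have "det ?M \<noteq> 0"
    by (intro det_row_scaled_vandermonde_non_zero[OF M]) auto
  then show ?thesis by (rule det_non_zero_imp_invertible_mat[OF M])
qed

lemma sumset_mod_subset: "q > 0 \<Longrightarrow> sumset_mod q as bs \<subseteq> {..<q}"
  unfolding sumset_mod_def by auto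

lemma distinct_gamma_vec: "distinct (gamma_vec q ap bp as bs)"
  unfolding gamma_vec_def by simp

lemma gamma_vec_less:
  assumes "q > 0"
  shows "\<forall>e\<in>set (gamma_vec q ap bp as bs). e < q"
proof -
  let ?S = "sumset_mod q ap bp \<union> sumset_mod q ap bs \<union> sumset_mod q as bp \<union> sumset_mod q as bs"
  have "?S \<subseteq> {..<q}" using sumset_mod_subset[OF assms] by blast
  moreover from this have "finite ?S" by (rule finite_subset) simp
  ultimately show ?thesis unfolding gamma_vec_def by auto
qed

theorem lemma1:
  fixes q K L T :: nat
    and \<alpha>p \<beta>p :: "nat list"
    and b\<alpha> x\<alpha> b\<beta> x\<beta> :: nat
  assumes "q > 0" "K > 0" "L > 0" "T > 0"
    and "length \<alpha>p = K" "\<forall>a \<in> set \<alpha>p. a < q"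
    and "length \<beta>p = L" "\<forall>b \<in> set \<beta>p. b < q"
    and "coprime x\<alpha> q" "coprime x\<beta> q"
  defines "\<alpha>s \<equiv> arith_prog q b\<alpha> x\<alpha> T"
    and "\<beta>s \<equiv> arith_prog q b\<beta> x\<beta> T"
  defines "\<gamma> \<equiv> gamma_vec q \<alpha>p \<beta>p \<alpha>s \<beta>s"
  defines "N \<equiv> length \<gamma>"
  assumes "q dvd CARD('p::prime_card) - 1"
  shows "\<exists>\<rho> :: 'p mod_ring list.
           length \<rho> = N \<and> (\<forall>r \<in> set \<rho>. r ^ q = 1) \<and>
           invertible_mat (vandermonde_like \<rho> \<gamma>) \<and>
           (\<forall>I \<subseteq> {0..<N}. card I = T \<longrightarrow>
              invertible_mat (submatrix (vandermonde_like \<rho> \<alpha>s) I {0..<T}) \<and>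
              invertible_mat (submatrix (vandermonde_like \<rho> \<beta>s) I {0..<T}))"
proof -
  have "q \<le> card {r::'p mod_ring. r ^ q = 1}"
    using assms by (intro card_roots_of_unity_ge) simp_all
  then obtain \<rho> :: "'p mod_ring list" where
    \<rho>: "length \<rho> = N" "\<forall>r\<in>set \<rho>. r ^ q = 1" and det: "det (vandermonde_like \<rho> \<gamma>) \<noteq> 0"
    using exists_roots_of_unity_det_vandermonde_like_non_zero[OF distinct_gamma_vec
        gamma_vec_less[OF \<open>q > 0\<close>]]
    unfolding \<gamma>_def N_def by blast
  have V: "vandermonde_like \<rho> \<gamma> \<in> carrier_mat N N"
    using vandermonde_like_carrier[of \<rho> \<gamma>] \<rho>(1) unfolding N_def by simp
  have "distinct \<rho>"
    using distinct_if_det_vandermonde_like_non_zero[OF det] \<rho>(1) unfolding N_def by simp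
  show ?thesis
  proof (intro exI[of _ \<rho>] conjI allI impI)
    show "invertible_mat (vandermonde_like \<rho> \<gamma>)"
      by (rule det_non_zero_imp_invertible_mat[OF V det])
    fix I assume "I \<subseteq> {0..<N}" "card I = T"
    with \<open>distinct \<rho>\<close> \<rho> \<open>q > 0\<close> assms(9,10)
    show "invertible_mat (submatrix (vandermonde_like \<rho> \<alpha>s) I {0..<T})"
      and "invertible_mat (submatrix (vandermonde_like \<rho> \<beta>s) I {0..<T})"
      unfolding \<alpha>s_def \<beta>s_def
      by (auto intro!: invertible_submatrix_vandermonde_like_arith_prog)
  qed (use \<rho> in auto)
qed

end
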